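(* There exists a closed, non-separable linear subspace $M\subset\ell^\infty$ such that every non-zero $x\in M$ has exactly countably infinitely many accumulation points, i.e. $M\subset L(\omega)\cup\{0\}$.
   Context: $\ell^\infty$ is the Banach space of bounded real sequences with the sup norm. For $x\in\ell^\infty$, $L_x$ denotes the set of accumulation points (subsequential limits) of $x$. $\omega$ denotes the cardinality of $\mathbb{N}$, and $L(\omega)=\{x\in\ell^\infty: |L_x|=\omega\}$. *)

theory Defs
  imports "HOL-Analysis.Analysis"
begin

text \<open>ell-infinity is modelled as the Banach space of bounded (continuous) functions
  (nat, real) bcontfun with the sup norm (nat carries the discrete topology).\<close>

type_synonym linf = "nat \<Rightarrow>\<^sub>C real"

definition acc_points :: "linf \<Rightarrow> real set" where
  "acc_points x = {a. \<exists>r. strict_mono r \<and> (\<lambda>n. apply_bcontfun x (r n)) \<longlonglongrightarrow> a}"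

definition L_omega :: "linf set" where
  "L_omega = {x. countable (acc_points x) \<and> infinite (acc_points x)}"

end

theory Submission
  imports Defs
begin

text \<open>Index the coordinates by triples (n, m, k), where n codes a node of the binary tree, and let
  M consist of the sequences with value x n / (m + 1) at (n, m, k), where x converges along every
  branch and, for each e > 0, satisfies |x| \<ge> e only on finitely many branches plus finitely many
  nodes. These conditions survive sums, scalar multiples and uniform limits, so M is a closed
  subspace. A non-zero limit point of the values of x is the limit of x along one of countably
  many branches, so a non-zero element of M has countably many accumulation points; the copies
  over k make the infinitely many values x n / (m + 1) with x n \<noteq> 0 accumulation points.
  The indicators of the uncountably many branches lie in M at mutual distance 1, so M is not
  separable.\<close>

definition concentrated_on_paths :: "('b \<Rightarrow> nat \<Rightarrow> 'a) \<Rightarrow> ('a \<Rightarrow> real) \<Rightarrow> bool" where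
  "concentrated_on_paths P x \<longleftrightarrow> (\<forall>b. convergent (x \<circ> P b)) \<and>
     (\<forall>e>0. \<exists>B K. finite B \<and> finite K \<and> {a. e \<le> \<bar>x a\<bar>} \<subseteq> K \<union> (\<Union>b\<in>B. range (P b)))"

lemma concentrated_on_pathsD:
  assumes "concentrated_on_paths P x"
  shows "convergent (x \<circ> P b)"
    and "e > 0 \<Longrightarrow> \<exists>B K. finite B \<and> finite K \<and> {a. e \<le> \<bar>x a\<bar>} \<subseteq> K \<union> (\<Union>b\<in>B. range (P b))"
  using assms unfolding concentrated_on_paths_def by blast+

lemma concentrated_on_paths_zero: "concentrated_on_paths P (\<lambda>a. 0)"
  unfolding concentrated_on_paths_def by (auto simp: comp_def convergent_const)

lemma concentrated_on_paths_add:
  assumes "concentrated_on_paths P x" "concentrated_on_paths P y"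
  shows "concentrated_on_paths P (\<lambda>a. x a + y a)"
  unfolding concentrated_on_paths_def
proof (intro conjI allI impI)
  fix b
  show "convergent ((\<lambda>a. x a + y a) \<circ> P b)"
    using convergent_add[OF assms[THEN concentrated_on_pathsD(1)]] by (simp add: comp_def)
next
  fix e :: real assume "e > 0"
  then obtain B1 K1 B2 K2 where "finite B1" "finite K1" "finite B2" "finite K2"
    and "{a. e/2 \<le> \<bar>x a\<bar>} \<subseteq> K1 \<union> (\<Union>b\<in>B1. range (P b))"
    and "{a. e/2 \<le> \<bar>y a\<bar>} \<subseteq> K2 \<union> (\<Union>b\<in>B2. range (P b))"
    using assms[THEN concentrated_on_pathsD(2), of "e/2"] by auto
  then have "{a. e/2 \<le> \<bar>x a\<bar>} \<union> {a. e/2 \<le> \<bar>y a\<bar>} \<subseteq> (K1 \<union> K2) \<union> (\<Union>b\<in>B1 \<union> B2. range (P b))"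
    by auto
  moreover have "{a. e \<le> \<bar>x a + y a\<bar>} \<subseteq> {a. e/2 \<le> \<bar>x a\<bar>} \<union> {a. e/2 \<le> \<bar>y a\<bar>}"
    by auto
  ultimately show "\<exists>B K. finite B \<and> finite K \<and> {a. e \<le> \<bar>x a + y a\<bar>} \<subseteq> K \<union> (\<Union>b\<in>B. range (P b))"
    using \<open>finite B1\<close> \<open>finite B2\<close> \<open>finite K1\<close> \<open>finite K2\<close>
    by (meson finite_UnI order_trans)
qed

lemma concentrated_on_paths_cmult:
  assumes "concentrated_on_paths P x"
  shows "concentrated_on_paths P (\<lambda>a. c * x a)"
  unfolding concentrated_on_paths_def
proof (intro conjI allI impI)
  fix b
  show "convergent ((\<lambda>a. c * x a) \<circ> P b)"
    using convergent_mult[OF convergent_const assms[THEN concentrated_on_pathsD(1)]]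
    by (simp add: comp_def)
next
  fix e :: real assume "e > 0"
  show "\<exists>B K. finite B \<and> finite K \<and> {a. e \<le> \<bar>c * x a\<bar>} \<subseteq> K \<union> (\<Union>b\<in>B. range (P b))"
  proof (cases "c = 0")
    case True
    with \<open>e > 0\<close> show ?thesis by auto
  next
    case False
    with \<open>e > 0\<close> obtain B K where BK: "finite B" "finite K"
      and cover: "{a. e / \<bar>c\<bar> \<le> \<bar>x a\<bar>} \<subseteq> K \<union> (\<Union>b\<in>B. range (P b))"
      using assms[THEN concentrated_on_pathsD(2), of "e / \<bar>c\<bar>"] by auto
    have "{a. e \<le> \<bar>c * x a\<bar>} \<subseteq> {a. e / \<bar>c\<bar> \<le> \<bar>x a\<bar>}"
      using False by (auto simp: abs_mult field_simps)
    with BK cover show ?thesis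
      by (meson order_trans)
  qed
qed

lemma concentrated_on_paths_uniform_limit:
  assumes approx: "\<And>e. e > 0 \<Longrightarrow> \<exists>y. concentrated_on_paths P y \<and> (\<forall>a. \<bar>y a - x a\<bar> < e)"
  shows "concentrated_on_paths P x"
  unfolding concentrated_on_paths_def
proof (intro conjI allI impI)
  fix b
  have "Cauchy (x \<circ> P b)"
  proof (rule metric_CauchyI)
    fix e :: real assume "e > 0"
    then obtain y where y: "concentrated_on_paths P y" "\<forall>a. \<bar>y a - x a\<bar> < e/3"
      using approx[of "e/3"] by auto
    then have "Cauchy (y \<circ> P b)"
      using concentrated_on_pathsD(1)[OF y(1)] by (simp add: Cauchy_convergent_iff)
    with \<open>e > 0\<close> obtain N where N: "\<forall>m\<ge>N. \<forall>n\<ge>N. dist (y (P b m)) (y (P b n)) < e/3"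
      using metric_CauchyD[of "y \<circ> P b" "e/3"] by auto
    have "dist (x (P b m)) (x (P b n)) < e" if "m \<ge> N" "n \<ge> N" for m n
    proof -
      have "\<bar>y (P b m) - y (P b n)\<bar> < e/3"
        using N that by (simp add: dist_real_def)
      with y(2)[rule_format, of "P b m"] y(2)[rule_format, of "P b n"] show ?thesis
        unfolding dist_real_def by arith
    qed
    then show "\<exists>N. \<forall>m\<ge>N. \<forall>n\<ge>N. dist ((x \<circ> P b) m) ((x \<circ> P b) n) < e"
      by auto
  qed
  then show "convergent (x \<circ> P b)"
    by (simp add: Cauchy_convergent_iff)
next
  fix e :: real assume "e > 0"
  then obtain y where y: "concentrated_on_paths P y" "\<forall>a. \<bar>y a - x a\<bar> < e/2"
    using approx[of "e/2"] by auto
  with \<open>e > 0\<close> obtain B K where BK: "finite B" "finite K"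
    and cover: "{a. e/2 \<le> \<bar>y a\<bar>} \<subseteq> K \<union> (\<Union>b\<in>B. range (P b))"
    using concentrated_on_pathsD(2)[of P y "e/2"] by auto
  have "{a. e \<le> \<bar>x a\<bar>} \<subseteq> {a. e/2 \<le> \<bar>y a\<bar>}"
  proof
    fix a assume "a \<in> {a. e \<le> \<bar>x a\<bar>}"
    with y(2)[rule_format, of a] abs_triangle_ineq2[of "x a" "y a"] show "a \<in> {a. e/2 \<le> \<bar>y a\<bar>}"
      by (simp add: abs_minus_commute)
  qed
  with BK cover show "\<exists>B K. finite B \<and> finite K \<and> {a. e \<le> \<bar>x a\<bar>} \<subseteq> K \<union> (\<Union>b\<in>B. range (P b))"
    by (meson order_trans)
qed

lemma islimpt_range_concentrated:
  assumes x: "concentrated_on_paths P x"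
    and B: "finite B" "finite K" "{a. e \<le> \<bar>x a\<bar>} \<subseteq> K \<union> (\<Union>b\<in>B. range (P b))"
    and c: "c islimpt range x" "e < \<bar>c\<bar>"
  shows "c \<in> (\<lambda>b. lim (x \<circ> P b)) ` B"
proof -
  have "eventually (\<lambda>w. w \<in> {w. e < \<bar>w\<bar>}) (at c)"
    using c(2) by (intro eventually_at_topological[THEN iffD2] exI[of _ "{w. e < \<bar>w\<bar>}"])
      (auto intro!: open_Collect_less continuous_intros)
  then have "c islimpt range x \<inter> {w. e < \<bar>w\<bar>}"
    by (rule islimpt_Int_eventually[OF c(1)])
  moreover have "range x \<inter> {w. e < \<bar>w\<bar>} \<subseteq> x ` K \<union> (\<Union>b\<in>B. range (x \<circ> P b))"
  proof
    fix w assume "w \<in> range x \<inter> {w. e < \<bar>w\<bar>}"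
    then obtain a where a: "w = x a" "e < \<bar>x a\<bar>"
      by blast
    then have "a \<in> K \<union> (\<Union>b\<in>B. range (P b))"
      using subsetD[OF B(3), of a] by simp
    with a show "w \<in> x ` K \<union> (\<Union>b\<in>B. range (x \<circ> P b))"
      by auto
  qed
  ultimately have "c islimpt x ` K \<union> (\<Union>b\<in>B. range (x \<circ> P b))"
    by (rule islimpt_subset)
  then have "c islimpt (\<Union>b\<in>B. range (x \<circ> P b))"
    using B(2) by (simp add: islimpt_Un_finite)
  then obtain b where "b \<in> B" "c islimpt range (x \<circ> P b)"
    by (auto simp: islimpt_finite_union_iff[OF B(1)])
  moreover have "(x \<circ> P b) \<longlonglongrightarrow> lim (x \<circ> P b)"
    using concentrated_on_pathsD(1)[OF x] by (simp add: convergent_LIMSEQ_iff)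
  ultimately show ?thesis
    using sequence_unique_limpt by blast
qed

lemma countable_limpts_range_concentrated:
  assumes x: "concentrated_on_paths P x"
  shows "countable {c. c islimpt range x}"
proof -
  have "\<forall>j. \<exists>B K. finite B \<and> finite K \<and> {a. 1 / real (Suc j) \<le> \<bar>x a\<bar>} \<subseteq> K \<union> (\<Union>b\<in>B. range (P b))"
    using concentrated_on_pathsD(2)[OF x] by simp
  then obtain B K where BK: "\<And>j. finite (B j)" "\<And>j. finite (K j)"
    "\<And>j. {a. 1 / real (Suc j) \<le> \<bar>x a\<bar>} \<subseteq> K j \<union> (\<Union>b\<in>B j. range (P b))"
    by metis
  have "{c. c islimpt range x} \<subseteq> insert 0 (\<Union>j. (\<lambda>b. lim (x \<circ> P b)) ` B j)"
  proof
    fix c assume "c \<in> {c. c islimpt range x}"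
    show "c \<in> insert 0 (\<Union>j. (\<lambda>b. lim (x \<circ> P b)) ` B j)"
    proof (cases "c = 0")
      case False
      then obtain j where "1 / real (Suc j) < \<bar>c\<bar>"
        using reals_Archimedean[of "\<bar>c\<bar>"] by (auto simp: inverse_eq_divide)
      with \<open>c \<in> {c. c islimpt range x}\<close> show ?thesis
        using islimpt_range_concentrated[OF x BK(1,2,3)] by blast
    qed simp
  qed
  moreover have "countable (insert 0 (\<Union>j. (\<lambda>b. lim (x \<circ> P b)) ` B j))"
    using BK(1) by (simp add: countable_finite)
  ultimately show ?thesis
    by (rule countable_subset)
qed

lemma concentrated_on_paths_rescaled:
  assumes x: "concentrated_on_paths P x" and bound: "\<And>a. \<bar>x a\<bar> \<le> C"
  shows "concentrated_on_paths (\<lambda>(b, m) j. (P b j, m)) (\<lambda>(a, m). x a / real (Suc m))"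
  unfolding concentrated_on_paths_def
proof (intro conjI allI impI)
  fix bm :: "'a \<times> nat"
  obtain b m where [simp]: "bm = (b, m)" by fastforce
  show "convergent ((\<lambda>(a, m). x a / real (Suc m)) \<circ> (\<lambda>(b, m) j. (P b j, m)) bm)"
    using convergent_mult[OF concentrated_on_pathsD(1)[OF x, of b] convergent_const[of "1 / real (Suc m)"]]
    by (simp add: comp_def)
next
  fix e :: real assume "e > 0"
  obtain B K where BK: "finite B" "finite K" "{a. e \<le> \<bar>x a\<bar>} \<subseteq> K \<union> (\<Union>b\<in>B. range (P b))"
    using concentrated_on_pathsD(2)[OF x \<open>e > 0\<close>] by blast
  obtain M where M: "C / e < real M"
    using reals_Archimedean2 by blast
  have cover: "(a, m) \<in> K \<times> {..<M} \<union> (\<Union>bm\<in>B \<times> {..<M}. range ((\<lambda>(b, m) j. (P b j, m)) bm))"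
    if large: "e \<le> \<bar>x a / real (Suc m)\<bar>" for a m
  proof -
    have "e * real (Suc m) \<le> C"
      using large bound[of a] by (simp add: abs_divide field_simps)
    also have "C < e * real M"
      using M \<open>e > 0\<close> by (simp add: field_simps)
    finally have "real (Suc m) < real M"
      using \<open>e > 0\<close> by (simp only: mult_less_cancel_left_pos)
    then have "m < M"
      by simp
    have "\<bar>x a\<bar> / real (Suc m) \<le> \<bar>x a\<bar> / 1"
      by (rule divide_left_mono) auto
    then have "a \<in> K \<union> (\<Union>b\<in>B. range (P b))"
      using large subsetD[OF BK(3), of a] by (simp add: abs_divide)
    then show ?thesis
    proof (elim UnE UN_E)
      assume "a \<in> K"
      with \<open>m < M\<close> show ?thesis
        by blast
    next
      fix b assume "b \<in> B" "a \<in> range (P b)"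
      with \<open>m < M\<close> show ?thesis
        by force
    qed
  qed
  have "{am. e \<le> \<bar>(\<lambda>(a, m). x a / real (Suc m)) am\<bar>} \<subseteq> K \<times> {..<M} \<union> (\<Union>bm\<in>B \<times> {..<M}. range ((\<lambda>(b, m) j. (P b j, m)) bm))"
  proof
    fix am assume "am \<in> {am. e \<le> \<bar>(\<lambda>(a, m). x a / real (Suc m)) am\<bar>}"
    then show "am \<in> K \<times> {..<M} \<union> (\<Union>bm\<in>B \<times> {..<M}. range ((\<lambda>(b, m) j. (P b j, m)) bm))"
      using cover[of "fst am" "snd am"] by (simp add: case_prod_beta)
  qed
  moreover have "finite (B \<times> {..<M})" "finite (K \<times> {..<M})"
    using BK(1,2) by auto
  ultimately show "\<exists>B K. finite B \<and> finite K \<and> {am. e \<le> \<bar>(\<lambda>(a, m). x a / real (Suc m)) am\<bar>} \<subseteq> K \<union> (\<Union>bm\<in>B. range ((\<lambda>(b, m) j. (P b j, m)) bm))"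
    by blast
qed

lemma not_separable_space_if_uncountable_separated:
  fixes M S :: "'a::metric_space set"
  assumes "S \<subseteq> M" "uncountable S" "e > 0"
    and separated: "\<And>u v. u \<in> S \<Longrightarrow> v \<in> S \<Longrightarrow> u \<noteq> v \<Longrightarrow> e \<le> dist u v"
  shows "\<not> separable_space (top_of_set M)"
proof
  assume "separable_space (top_of_set M)"
  then obtain C where C: "countable C" "C \<subseteq> M" "M \<inter> closure C = M"
    by (auto simp: separable_space_def closure_of_subtopology Int_absorb1)
  have "\<exists>c\<in>C. dist c u < e/2" if "u \<in> S" for u
  proof -
    have "u \<in> closure C"
      using C(3) \<open>S \<subseteq> M\<close> that by blast
    then show ?thesis
      using \<open>e > 0\<close> unfolding closure_approachable by (meson half_gt_zero)
  qed
  then obtain f where f: "\<And>u. u \<in> S \<Longrightarrow> f u \<in> C \<and> dist (f u) u < e/2"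
    by metis
  have "inj_on f S"
  proof (rule inj_onI)
    fix u v assume "u \<in> S" "v \<in> S" "f u = f v"
    then have "dist u v < e"
      using f[of u] f[of v] dist_triangle3[of u v "f u"] by simp
    with separated \<open>u \<in> S\<close> \<open>v \<in> S\<close> show "u = v"
      by (meson not_le)
  qed
  moreover have "countable (f ` S)"
    using C(1) f by (meson countable_subset image_subsetI)
  ultimately show False
    using \<open>uncountable S\<close> countable_image_inj_on by blast
qed

lemma uncountable_UNIV_nat_bool: "uncountable (UNIV :: (nat \<Rightarrow> bool) set)"
proof
  assume "countable (UNIV :: (nat \<Rightarrow> bool) set)"
  then obtain g :: "nat \<Rightarrow> nat \<Rightarrow> bool" where "range g = UNIV"
    by (metis uncountable_def UNIV_not_empty)
  then obtain n where "(\<lambda>k. \<not> g k k) = g n"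
    by (metis UNIV_I imageE)
  then show False
    by (metis (full_types))
qed

definition branch_node :: "(nat \<Rightarrow> bool) \<Rightarrow> nat \<Rightarrow> nat" where
  "branch_node b n = to_nat (map b [0..<n])"

lemma branch_node_eqD:
  assumes "branch_node b n = branch_node c m"
  shows "n = m" and "i < n \<Longrightarrow> b i = c i"
proof -
  have eq: "map b [0..<n] = map c [0..<m]"
    using assms by (simp add: branch_node_def)
  then show "n = m"
    by (metis length_map length_upt minus_nat.diff_0)
  then show "i < n \<Longrightarrow> b i = c i"
    using nth_map_upt[of i n 0 b] eq by (metis add_0 diff_zero nth_map_upt)
qed

lemma branch_node_notin_branch:
  assumes "b i \<noteq> c i" "i < n"
  shows "branch_node b n \<notin> range (branch_node c)"
  using assms branch_node_eqD by blast

definition triple_encode :: "nat \<Rightarrow> nat \<Rightarrow> nat \<Rightarrow> nat" where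
  "triple_encode n m k = prod_encode (n, prod_encode (m, k))"

lemma triple_encode_surj: "\<exists>n m k. p = triple_encode n m k"
  unfolding triple_encode_def by (metis prod_decode_inverse surj_pair)

lemma strict_mono_triple_encode: "strict_mono (triple_encode n m)"
proof -
  have snd_mono: "strict_mono (\<lambda>q. prod_encode (a, q))" for a
    by (simp add: strict_mono_Suc_iff prod_encode_def)
  show ?thesis
    using strict_mono_o[OF snd_mono snd_mono] unfolding triple_encode_def comp_def .
qed

definition branch_space :: "linf set" where
  "branch_space = {z :: linf. concentrated_on_paths branch_node (\<lambda>n. z (triple_encode n 0 0)) \<and>
     (\<forall>n m k. z (triple_encode n m k) = z (triple_encode n 0 0) / real (Suc m))}"

lemma branch_spaceD:
  fixes z :: linf
  assumes "z \<in> branch_space"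
  shows "concentrated_on_paths branch_node (\<lambda>n. z (triple_encode n 0 0))"
    and "z (triple_encode n m k) = z (triple_encode n 0 0) / real (Suc m)"
  using assms unfolding branch_space_def by blast+

lemma branch_spaceI:
  fixes z :: linf
  assumes "concentrated_on_paths branch_node (\<lambda>n. z (triple_encode n 0 0))"
    and "\<And>n m k. z (triple_encode n m k) = z (triple_encode n 0 0) / real (Suc m)"
  shows "z \<in> branch_space"
  using assms unfolding branch_space_def by blast

lemma subspace_branch_space: "subspace branch_space"
  unfolding subspace_def
proof (intro conjI ballI allI)
  show "0 \<in> branch_space"
    by (rule branch_spaceI) (simp_all add: concentrated_on_paths_zero)
next
  fix y z :: linf assume y: "y \<in> branch_space" and z: "z \<in> branch_space"
  show "y + z \<in> branch_space"
  proof (rule branch_spaceI)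
    show "concentrated_on_paths branch_node (\<lambda>n. (y + z) (triple_encode n 0 0))"
      using concentrated_on_paths_add[OF y[THEN branch_spaceD(1)] z[THEN branch_spaceD(1)]] by simp
    show "(y + z) (triple_encode n m k) = (y + z) (triple_encode n 0 0) / real (Suc m)" for n m k
      unfolding plus_bcontfun.rep_eq branch_spaceD(2)[OF y, of n m k] branch_spaceD(2)[OF z, of n m k]
      by (simp add: add_divide_distrib)
  qed
next
  fix c :: real and z :: linf assume z: "z \<in> branch_space"
  show "c *\<^sub>R z \<in> branch_space"
  proof (rule branch_spaceI)
    show "concentrated_on_paths branch_node (\<lambda>n. (c *\<^sub>R z) (triple_encode n 0 0))"
      using concentrated_on_paths_cmult[OF z[THEN branch_spaceD(1)], of c] by simp
    show "(c *\<^sub>R z) (triple_encode n m k) = (c *\<^sub>R z) (triple_encode n 0 0) / real (Suc m)" for n m k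
      unfolding scaleR_bcontfun.rep_eq branch_spaceD(2)[OF z, of n m k] by simp
  qed
qed

lemma closed_branch_space: "closed branch_space"
  unfolding closed_sequential_limits
proof (intro allI impI, elim conjE)
  fix Z :: "nat \<Rightarrow> linf" and z
  assume Z: "\<forall>j. Z j \<in> branch_space" and lim: "Z \<longlonglongrightarrow> z"
  have pointwise: "(\<lambda>j. Z j p) \<longlonglongrightarrow> z p" for p
    using tendsto_uniform_limitI[OF tendsto_bcontfun_uniform_limit[OF lim] UNIV_I] .
  have "concentrated_on_paths branch_node (\<lambda>n. z (triple_encode n 0 0))"
  proof (rule concentrated_on_paths_uniform_limit)
    fix e :: real assume "e > 0"
    then obtain j where "dist (Z j) z < e"
      using metric_LIMSEQ_D[OF lim] by blast
    then have "\<forall>n. \<bar>Z j (triple_encode n 0 0) - z (triple_encode n 0 0)\<bar> < e"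
      using dist_fun_lt_imp_dist_val_lt by (metis dist_real_def)
    with Z show "\<exists>y. concentrated_on_paths branch_node y \<and> (\<forall>n. \<bar>y n - z (triple_encode n 0 0)\<bar> < e)"
      using branch_spaceD(1) by blast
  qed
  moreover have "z (triple_encode n m k) = z (triple_encode n 0 0) / real (Suc m)" for n m k
  proof -
    have "(\<lambda>j. Z j (triple_encode n m k)) = (\<lambda>j. Z j (triple_encode n 0 0) / real (Suc m))"
      using Z branch_spaceD(2) by blast
    then have "(\<lambda>j. Z j (triple_encode n m k)) \<longlonglongrightarrow> z (triple_encode n 0 0) / real (Suc m)"
      by (simp add: tendsto_divide pointwise)
    then show ?thesis
      using pointwise LIMSEQ_unique by blast
  qed
  ultimately show "z \<in> branch_space"
    by (rule branch_spaceI)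
qed

lemma acc_points_subset_closure: "acc_points z \<subseteq> closure (range (apply_bcontfun z))"
proof
  fix a assume "a \<in> acc_points z"
  then obtain r where "(\<lambda>n. z (r n)) \<longlonglongrightarrow> a"
    unfolding acc_points_def by blast
  then show "a \<in> closure (range (apply_bcontfun z))"
    unfolding closure_sequential by (intro exI[of _ "\<lambda>n. z (r n)"]) simp
qed

lemma branch_space_subset_L_omega:
  fixes z :: linf
  assumes z: "z \<in> branch_space" "z \<noteq> 0"
  shows "z \<in> L_omega"
proof -
  define x where "x n = z (triple_encode n 0 0)" for n
  have z_eq: "z (triple_encode n m k) = x n / real (Suc m)" for n m k
    unfolding x_def by (rule branch_spaceD(2)[OF z(1)])
  have range_z: "range (apply_bcontfun z) = range (\<lambda>(n, m). x n / real (Suc m))"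
  proof (intro equalityI subsetI)
    fix w assume "w \<in> range (apply_bcontfun z)"
    then obtain p where "w = z p"
      by blast
    moreover obtain n m k where "p = triple_encode n m k"
      using triple_encode_surj by blast
    ultimately have "w = (\<lambda>(n, m). x n / real (Suc m)) (n, m)"
      by (simp add: z_eq)
    then show "w \<in> range (\<lambda>(n, m). x n / real (Suc m))"
      by (metis rangeI)
  next
    fix w assume "w \<in> range (\<lambda>(n, m). x n / real (Suc m))"
    then obtain n m where "w = z (triple_encode n m 0)"
      by (auto simp: z_eq)
    then show "w \<in> range (apply_bcontfun z)"
      by simp
  qed
  have "concentrated_on_paths (\<lambda>(b, m) j. (branch_node b j, m)) (\<lambda>(n, m). x n / real (Suc m))"
    using branch_spaceD(1)[OF z(1)] norm_bounded[of z]
    by (intro concentrated_on_paths_rescaled) (auto simp: x_def)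
  then have "countable (closure (range (apply_bcontfun z)))"
    unfolding closure_def range_z by (simp add: countable_limpts_range_concentrated)
  then have "countable (acc_points z)"
    using acc_points_subset_closure countable_subset by blast
  obtain n where "x n \<noteq> 0"
  proof -
    obtain p where "z p \<noteq> 0"
      using z(2) by (metis bcontfun_eqI zero_bcontfun.rep_eq)
    moreover obtain n m k where "p = triple_encode n m k"
      using triple_encode_surj by blast
    ultimately show thesis
      using that by (simp add: z_eq)
  qed
  have "inj (\<lambda>m. x n / real (Suc m))"
    using \<open>x n \<noteq> 0\<close> by (auto simp: inj_on_def)
  then have "infinite (range (\<lambda>m. x n / real (Suc m)))"
    by (rule range_inj_infinite)
  moreover have "range (\<lambda>m. x n / real (Suc m)) \<subseteq> acc_points z"
    unfolding acc_points_def
    by (auto intro!: exI[of _ "triple_encode n _"] strict_mono_triple_encode simp: z_eq)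
  ultimately have "infinite (acc_points z)"
    using infinite_super by blast
  with \<open>countable (acc_points z)\<close> show ?thesis
    unfolding L_omega_def by simp
qed

definition branch_indicator :: "(nat \<Rightarrow> bool) \<Rightarrow> linf" where
  "branch_indicator b = Bcontfun (\<lambda>p. case prod_decode p of (n, q) \<Rightarrow>
     if n \<in> range (branch_node b) then 1 / real (Suc (fst (prod_decode q))) else 0)"

lemma branch_indicator_triple_encode:
  "branch_indicator b (triple_encode n m k) = (if n \<in> range (branch_node b) then 1 / real (Suc m) else 0)"
proof -
  have "(\<lambda>p. case prod_decode p of (n, q) \<Rightarrow>
      if n \<in> range (branch_node b) then 1 / real (Suc (fst (prod_decode q))) else 0) \<in> bcontfun"
    by (rule bcontfun_normI[where b = 1]) (auto split: prod.splits)
  then show ?thesis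
    by (simp add: branch_indicator_def Bcontfun_inverse triple_encode_def)
qed

lemma branch_indicator_in_branch_space: "branch_indicator b \<in> branch_space"
proof (rule branch_spaceI)
  show "branch_indicator b (triple_encode n m k) = branch_indicator b (triple_encode n 0 0) / real (Suc m)" for n m k
    by (simp add: branch_indicator_triple_encode)
  let ?x = "\<lambda>n. if n \<in> range (branch_node b) then 1 else 0 :: real"
  have "concentrated_on_paths branch_node ?x"
    unfolding concentrated_on_paths_def
  proof (intro conjI allI impI)
    show "convergent (?x \<circ> branch_node c)" for c
    proof (cases "c = b")
      case True
      then show ?thesis
        by (simp add: comp_def convergent_const)
    next
      case False
      then obtain i where "c i \<noteq> b i"
        by blast
      then have "eventually (\<lambda>j. (?x \<circ> branch_node c) j = 0) sequentially"
        using branch_node_notin_branch[of c i b] unfolding eventually_sequentially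
        by (intro exI[of _ "Suc i"]) simp
      then show ?thesis
        unfolding convergent_def by (blast intro: tendsto_eventually)
    qed
    show "\<exists>B K. finite B \<and> finite K \<and> {n. e \<le> \<bar>?x n\<bar>} \<subseteq> K \<union> (\<Union>c\<in>B. range (branch_node c))"
      if "e > 0" for e
      using that by (intro exI[of _ "{b}"] exI[of _ "{}"]) auto
  qed
  then show "concentrated_on_paths branch_node (\<lambda>n. branch_indicator b (triple_encode n 0 0))"
    by (simp add: branch_indicator_triple_encode cong: if_cong)
qed

lemma dist_branch_indicator:
  assumes "b \<noteq> c"
  shows "1 \<le> dist (branch_indicator b) (branch_indicator c)"
proof -
  obtain i where "b i \<noteq> c i"
    using assms by blast
  then have "branch_node b (Suc i) \<notin> range (branch_node c)"
    by (rule branch_node_notin_branch) simp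
  then have "dist (branch_indicator b (triple_encode (branch_node b (Suc i)) 0 0))
      (branch_indicator c (triple_encode (branch_node b (Suc i)) 0 0)) = 1"
    by (simp add: branch_indicator_triple_encode)
  then show ?thesis
    using dist_bounded by metis
qed

theorem proposition3p2:
  shows "\<exists>M :: linf set. subspace M \<and> closed M \<and>
           \<not> separable_space (top_of_set M) \<and> M \<subseteq> L_omega \<union> {0}"
proof (intro exI conjI)
  have "inj branch_indicator"
    using dist_branch_indicator by (metis dist_self inj_on_def not_one_le_zero)
  then have "uncountable (range branch_indicator)"
    using uncountable_UNIV_nat_bool countable_image_inj_on by blast
  moreover have "1 \<le> dist u v"
    if "u \<in> range branch_indicator" "v \<in> range branch_indicator" "u \<noteq> v" for u v
    using that by (auto intro: dist_branch_indicator)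
  ultimately show "\<not> separable_space (top_of_set branch_space)"
    using branch_indicator_in_branch_space
    by (intro not_separable_space_if_uncountable_separated[where e = 1]) auto
  show "branch_space \<subseteq> L_omega \<union> {0}"
    using branch_space_subset_L_omega by blast
qed (simp_all add: subspace_branch_space closed_branch_space)

end
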